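(* Let $r \ge t \ge 1$ be integers. If $M$ is a loopless rank-$r$ matroid with no $(t+1)$-claw, then $|E(M)| \ge 2r - t$. If equality holds, then $M$ is the direct sum of $r-t$ circuits and some number of coloops.
   Context: A claw of a matroid $M$ is a set that is both a flat and an independent set of $M$; a $k$-claw is a claw of size $k$. *)

theory Defs
  imports Main
begin

definition matroid :: "'a set \<Rightarrow> ('a set \<Rightarrow> bool) \<Rightarrow> bool" where
  "matroid E indep \<longleftrightarrow>
     finite E \<and> indep {} \<and>
     (\<forall>I. indep I \<longrightarrow> I \<subseteq> E) \<and>
     (\<forall>I J. indep J \<and> I \<subseteq> J \<longrightarrow> indep I) \<and>
     (\<forall>I J. indep I \<and> indep J \<and> card I < card J \<longrightarrow>
        (\<exists>x \<in> J - I. indep (insert x I)))"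

definition mrank :: "('a set \<Rightarrow> bool) \<Rightarrow> 'a set \<Rightarrow> nat" where
  "mrank indep X = Max (card ` {I. I \<subseteq> X \<and> indep I})"

definition matroid_rank :: "'a set \<Rightarrow> ('a set \<Rightarrow> bool) \<Rightarrow> nat" where
  "matroid_rank E indep = mrank indep E"

definition mclosure :: "'a set \<Rightarrow> ('a set \<Rightarrow> bool) \<Rightarrow> 'a set \<Rightarrow> 'a set" where
  "mclosure E indep X = {e \<in> E. mrank indep (insert e X) = mrank indep X}"

definition flat :: "'a set \<Rightarrow> ('a set \<Rightarrow> bool) \<Rightarrow> 'a set \<Rightarrow> bool" where
  "flat E indep X \<longleftrightarrow> X \<subseteq> E \<and> mclosure E indep X = X"

definition claw :: "'a set \<Rightarrow> ('a set \<Rightarrow> bool) \<Rightarrow> 'a set \<Rightarrow> bool" where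
  "claw E indep X \<longleftrightarrow> flat E indep X \<and> indep X"

definition loopless :: "'a set \<Rightarrow> ('a set \<Rightarrow> bool) \<Rightarrow> bool" where
  "loopless E indep \<longleftrightarrow> (\<forall>e \<in> E. indep {e})"

definition circuit :: "'a set \<Rightarrow> ('a set \<Rightarrow> bool) \<Rightarrow> 'a set \<Rightarrow> bool" where
  "circuit E indep C \<longleftrightarrow> C \<subseteq> E \<and> \<not> indep C \<and> (\<forall>x \<in> C. indep (C - {x}))"

text \<open>M is the direct sum of k circuits C 0, ..., C (k-1) (pairwise disjoint circuits of M)
  and a set K of coloops: the ground set is the disjoint union of the C i and K, and
  a set is independent iff it is independent in each summand, i.e. it is a subset of E
  containing none of the C i entirely (a circuit matroid on C has as independent sets
  exactly the proper subsets of C; a coloop is free).\<close>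
definition direct_sum_circuits_coloops ::
  "'a set \<Rightarrow> ('a set \<Rightarrow> bool) \<Rightarrow> nat \<Rightarrow> bool" where
  "direct_sum_circuits_coloops E indep k \<longleftrightarrow>
     (\<exists>(C :: nat \<Rightarrow> 'a set) (K :: 'a set).
        (\<forall>i<k. circuit E indep (C i)) \<and>
        (\<forall>i<k. \<forall>j<k. i \<noteq> j \<longrightarrow> C i \<inter> C j = {}) \<and>
        (\<forall>i<k. C i \<inter> K = {}) \<and>
        E = (\<Union>i<k. C i) \<union> K \<and>
        (\<forall>I. indep I \<longleftrightarrow> I \<subseteq> E \<and> (\<forall>i<k. \<not> C i \<subseteq> I)))"

end

theory Submission
  imports Defs
begin

text \<open>Fix a basis B. For e outside B, let D(e) \<subseteq> B be its fundamental circuit without e;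
  D(e) is nonempty since M is loopless. A subset of B containing no D(e) is a claw, so for
  every choice f(e) \<in> D(e) the claw B - f(E - B) has at most t elements, which gives
  r - |E - B| \<le> t. If equality holds, f can never be chosen non-injective, so the sets D(e)
  are pairwise disjoint. Then the fundamental circuits do not interfere under basis exchange,
  and a set is independent iff it contains none of them.\<close>

lemma direct_sum_circuits_coloopsI:
  assumes subset_ground: "\<And>i. i < k \<Longrightarrow> C i \<subseteq> E"
    and nonempty: "\<And>i. i < k \<Longrightarrow> C i \<noteq> {}"
    and disjoint: "\<And>i j. i < k \<Longrightarrow> j < k \<Longrightarrow> i \<noteq> j \<Longrightarrow> C i \<inter> C j = {}"
    and indep_iff: "\<And>I. indep I \<longleftrightarrow> I \<subseteq> E \<and> (\<forall>i<k. \<not> C i \<subseteq> I)"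
  shows "direct_sum_circuits_coloops E indep k"
proof -
  have "circuit E indep (C i)" if i: "i < k" for i
    unfolding circuit_def
  proof (intro conjI ballI)
    show "C i \<subseteq> E" "\<not> indep (C i)"
      using i subset_ground indep_iff by auto
    fix y assume "y \<in> C i"
    then have "\<not> C j \<subseteq> C i - {y}" if "j < k" for j
      using disjoint[OF i that] nonempty[OF that] by (cases "j = i") auto
    then show "indep (C i - {y})"
      using indep_iff subset_ground[OF i] by blast
  qed
  then show ?thesis
    unfolding direct_sum_circuits_coloops_def using disjoint subset_ground indep_iff
    by (intro exI[of _ C] exI[of _ "E - (\<Union>i<k. C i)"]) (auto dest: subsetD[OF subset_ground])
qed

lemma card_insert_Diff_singleton:
  assumes "finite B" "b \<in> B" "e \<notin> B"
  shows "card (insert e (B - {b})) = card B"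
proof -
  have "card (insert e (B - {b})) = Suc (card (B - {b}))"
    using assms by (intro card_insert_disjoint) auto
  also have "\<dots> = card B"
    using assms(1,2) by (rule card.remove[symmetric])
  finally show ?thesis .
qed

locale fin_matroid =
  fixes E :: "'a set" and indep :: "'a set \<Rightarrow> bool"
  assumes matroid: "matroid E indep"
begin

lemma finite_ground: "finite E"
  using matroid unfolding matroid_def by blast

lemma indep_empty: "indep {}"
  using matroid unfolding matroid_def by blast

lemma indep_subset_ground: "indep I \<Longrightarrow> I \<subseteq> E"
  using matroid unfolding matroid_def by blast

lemma indep_subset: "indep J \<Longrightarrow> I \<subseteq> J \<Longrightarrow> indep I"
  using matroid unfolding matroid_def by blast

lemma indep_augment:
  "indep I \<Longrightarrow> indep J \<Longrightarrow> card I < card J \<Longrightarrow> \<exists>x\<in>J - I. indep (insert x I)"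
  using matroid unfolding matroid_def by blast

lemma indep_finite: "indep I \<Longrightarrow> finite I"
  using finite_ground indep_subset_ground finite_subset by blast

lemma finite_card_indep_subsets:
  assumes "X \<subseteq> E"
  shows "finite (card ` {I. I \<subseteq> X \<and> indep I})"
proof -
  have "finite (Pow X)"
    using assms finite_ground finite_subset by blast
  then show ?thesis
    by (rule finite_imageI[OF finite_subset, rotated]) auto
qed

lemma card_le_mrank: "X \<subseteq> E \<Longrightarrow> indep I \<Longrightarrow> I \<subseteq> X \<Longrightarrow> card I \<le> mrank indep X"
  unfolding mrank_def using finite_card_indep_subsets by (intro Max_ge) auto

lemma mrank_attained:
  assumes "X \<subseteq> E"
  obtains I where "I \<subseteq> X" "indep I" "card I = mrank indep X"
proof -
  have "mrank indep X \<in> card ` {I. I \<subseteq> X \<and> indep I}"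
    unfolding mrank_def using finite_card_indep_subsets[OF assms] indep_empty
    by (intro Max_in) auto
  then show ?thesis
    using that by auto
qed

lemma mrank_indep:
  assumes "indep X"
  shows "mrank indep X = card X"
proof -
  have "X \<subseteq> E"
    using assms indep_subset_ground by blast
  then obtain I where I: "I \<subseteq> X" "card I = mrank indep X"
    by (rule mrank_attained)
  have "card I \<le> card X"
    using indep_finite[OF assms] I(1) by (rule card_mono)
  moreover have "card X \<le> mrank indep X"
    using \<open>X \<subseteq> E\<close> assms order_refl by (rule card_le_mrank)
  ultimately show ?thesis
    using I(2) by linarith
qed

lemma indep_extend:
  assumes "indep B" "B \<subseteq> X"
  shows "indep I \<Longrightarrow> I \<subseteq> X \<Longrightarrow> card I \<le> card B \<Longrightarrow>
    \<exists>J. I \<subseteq> J \<and> J \<subseteq> X \<and> indep J \<and> card J = card B"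
proof (induction "card B - card I" arbitrary: I)
  case 0
  then show ?case
    by (intro exI[of _ I]) simp
next
  case (Suc n)
  then have "card I < card B"
    by simp
  then obtain x where x: "x \<in> B - I" "indep (insert x I)"
    using indep_augment[OF Suc.prems(1) assms(1)] by blast
  then have "card (insert x I) = Suc (card I)"
    using indep_finite[OF Suc.prems(1)] by simp
  then have "\<exists>J. insert x I \<subseteq> J \<and> J \<subseteq> X \<and> indep J \<and> card J = card B"
    using Suc x assms(2) by (intro Suc.hyps) auto
  then show ?case by blast
qed

definition basis :: "'a set \<Rightarrow> bool" where
  "basis B \<longleftrightarrow> indep B \<and> card B = matroid_rank E indep"

lemma card_indep_le_rank: "indep I \<Longrightarrow> card I \<le> matroid_rank E indep"
  unfolding matroid_rank_def using card_le_mrank indep_subset_ground by blast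

lemma basis_exists:
  obtains B where "basis B"
  using mrank_attained[of E] unfolding basis_def matroid_rank_def by blast

lemma basis_subset_ground: "basis B \<Longrightarrow> B \<subseteq> E"
  unfolding basis_def using indep_subset_ground by blast

lemma card_ground_eq_rank_add:
  assumes "basis B"
  shows "card E = matroid_rank E indep + card (E - B)"
proof -
  have "B \<subseteq> E"
    using assms by (rule basis_subset_ground)
  have "finite B"
    using \<open>B \<subseteq> E\<close> finite_ground by (rule finite_subset)
  have "card (E - B) = card E - card B"
    using \<open>finite B\<close> \<open>B \<subseteq> E\<close> by (rule card_Diff_subset)
  moreover have "card B \<le> card E"
    using finite_ground \<open>B \<subseteq> E\<close> by (rule card_mono)
  ultimately show ?thesis
    using assms unfolding basis_def by linarith
qed

lemma basis_insert_dependent: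
  assumes "basis B" "e \<notin> B"
  shows "\<not> indep (insert e B)"
proof
  assume "indep (insert e B)"
  then have "card (insert e B) \<le> matroid_rank E indep"
    by (rule card_indep_le_rank)
  moreover have "card (insert e B) = Suc (card B)"
    using assms indep_finite unfolding basis_def by simp
  ultimately show False
    using assms(1) unfolding basis_def by simp
qed

text \<open>insert e (exchangeable B e) is the fundamental circuit of e with respect to B.\<close>

definition exchangeable :: "'a set \<Rightarrow> 'a \<Rightarrow> 'a set" where
  "exchangeable B e = {b \<in> B. indep (insert e (B - {b}))}"

lemma exchangeable_subset: "exchangeable B e \<subseteq> B"
  unfolding exchangeable_def by blast

lemma dependent_insert_exchangeable:
  assumes B: "indep B" and e: "e \<notin> B" and dep: "\<not> indep (insert e B)"
  shows "\<not> indep (insert e (exchangeable B e))"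
proof
  let ?D = "exchangeable B e"
  assume indep_D: "indep (insert e ?D)"
  have "?D \<noteq> B"
    using indep_D dep by auto
  then have "card ?D < card B"
    using exchangeable_subset indep_finite[OF B] by (meson psubset_card_mono psubsetI)
  moreover have "e \<notin> ?D" "finite ?D"
    using exchangeable_subset e indep_finite[OF B] finite_subset by blast+
  ultimately have card_le: "card (insert e ?D) \<le> card B"
    by simp
  have "insert e ?D \<subseteq> insert e B"
    using exchangeable_subset by (rule insert_mono)
  from indep_extend[OF B subset_insertI indep_D this card_le]
  obtain J where J: "insert e ?D \<subseteq> J" "J \<subseteq> insert e B" "indep J" "card J = card B"
    by blast
  have "J \<noteq> insert e B"
    using J(3) dep by blast
  with J(1,2) obtain b where b: "b \<in> B" "b \<notin> J"
    by blast
  have "J \<subseteq> insert e (B - {b})"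
    using J(2) b(2) by blast
  moreover have "card (insert e (B - {b})) = card B"
    using indep_finite[OF B] b(1) e by (rule card_insert_Diff_singleton)
  moreover have "finite (insert e (B - {b}))"
    using indep_finite[OF B] by simp
  ultimately have "J = insert e (B - {b})"
    using J(4) by (metis card_subset_eq)
  then have "b \<in> ?D"
    using J(3) b unfolding exchangeable_def by blast
  then show False
    using J(1) b by blast
qed

lemma exchangeable_subset_if_dependent:
  assumes "Z \<subseteq> B" "\<not> indep (insert e Z)"
  shows "exchangeable B e \<subseteq> Z"
proof
  fix b assume b: "b \<in> exchangeable B e"
  show "b \<in> Z"
  proof (rule ccontr)
    assume "b \<notin> Z"
    then have "insert e Z \<subseteq> insert e (B - {b})"
      using assms(1) by auto
    then show False
      using b assms(2) indep_subset unfolding exchangeable_def by blast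
  qed
qed

lemma fundamental_circuit_dependent:
  assumes "basis B" "e \<notin> B"
  shows "\<not> indep (insert e (exchangeable B e))"
  using assms basis_insert_dependent dependent_insert_exchangeable unfolding basis_def by blast

lemma exchangeable_eq:
  assumes "basis B" "basis B'" "e \<notin> B" "e \<notin> B'" "exchangeable B e \<subseteq> B'"
  shows "exchangeable B' e = exchangeable B e"
proof
  have dep: "\<not> indep (insert e (exchangeable B e))" "\<not> indep (insert e (exchangeable B' e))"
    using assms fundamental_circuit_dependent by blast+
  show sub: "exchangeable B' e \<subseteq> exchangeable B e"
    using exchangeable_subset_if_dependent[OF assms(5) dep(1)] .
  show "exchangeable B e \<subseteq> exchangeable B' e"
    using exchangeable_subset_if_dependent[OF _ dep(2)] sub exchangeable_subset by blast
qed

lemma exchangeable_choice: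
  assumes "loopless E indep" "basis B"
  obtains f where "\<And>e. e \<in> E - B \<Longrightarrow> f e \<in> exchangeable B e"
proof -
  have "exchangeable B e \<noteq> {}" if "e \<in> E - B" for e
    using fundamental_circuit_dependent[OF assms(2)] assms(1) that
    unfolding loopless_def by fastforce
  then obtain f where "\<forall>e\<in>E - B. f e \<in> exchangeable B e"
    using bchoice[of "E - B" "\<lambda>e b. b \<in> exchangeable B e"] by blast
  then show ?thesis
    using that by blast
qed

lemma basis_exchange:
  assumes "basis B" "e \<notin> B" "b \<in> exchangeable B e"
  shows "basis (insert e (B - {b}))"
proof -
  have "finite B"
    using assms(1) indep_finite unfolding basis_def by blast
  moreover have "b \<in> B"
    using assms(3) exchangeable_subset by blast
  ultimately have "card (insert e (B - {b})) = card B"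
    using assms(2) by (rule card_insert_Diff_singleton)
  then show ?thesis
    using assms unfolding basis_def exchangeable_def by simp
qed

lemma claw_if_insert_indep:
  assumes Y: "indep Y" and insert_indep: "\<And>y. y \<in> E \<Longrightarrow> y \<notin> Y \<Longrightarrow> indep (insert y Y)"
  shows "claw E indep Y"
proof -
  have "Y \<subseteq> E"
    using Y indep_subset_ground by blast
  have "mclosure E indep Y = Y"
  proof (intro equalityI subsetI)
    fix y assume y: "y \<in> mclosure E indep Y"
    show "y \<in> Y"
    proof (rule ccontr)
      assume "y \<notin> Y"
      moreover have "y \<in> E"
        using y unfolding mclosure_def by blast
      ultimately have "mrank indep (insert y Y) = Suc (card Y)"
        using mrank_indep insert_indep indep_finite[OF Y] by simp
      then show False
        using y mrank_indep[OF Y] unfolding mclosure_def by simp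
    qed
  next
    fix y assume "y \<in> Y"
    then show "y \<in> mclosure E indep Y"
      using \<open>Y \<subseteq> E\<close> unfolding mclosure_def by (auto simp: insert_absorb)
  qed
  then show ?thesis
    using Y \<open>Y \<subseteq> E\<close> unfolding claw_def flat_def by blast
qed

lemma claw_if_avoids_exchangeable:
  assumes B: "indep B" and "Y \<subseteq> B" and avoids: "\<And>e. e \<in> E - B \<Longrightarrow> \<not> exchangeable B e \<subseteq> Y"
  shows "claw E indep Y"
proof (rule claw_if_insert_indep)
  show "indep Y"
    using B \<open>Y \<subseteq> B\<close> by (rule indep_subset)
  fix y assume "y \<in> E" "y \<notin> Y"
  show "indep (insert y Y)"
  proof (cases "y \<in> B")
    case True
    then show ?thesis
      using B \<open>Y \<subseteq> B\<close> indep_subset by (metis insert_subset)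
  next
    case False
    then obtain b where b: "b \<in> exchangeable B y" "b \<notin> Y"
      using avoids \<open>y \<in> E\<close> by blast
    then have "indep (insert y (B - {b}))"
      unfolding exchangeable_def by blast
    moreover have "insert y Y \<subseteq> insert y (B - {b})"
      using b(2) \<open>Y \<subseteq> B\<close> by blast
    ultimately show ?thesis
      by (rule indep_subset)
  qed
qed

lemma rank_le_card_image_if_claw_free:
  assumes B: "basis B" and no_claw: "\<And>X. claw E indep X \<Longrightarrow> card X \<noteq> t + 1"
    and f: "\<And>e. e \<in> E - B \<Longrightarrow> f e \<in> exchangeable B e"
  shows "matroid_rank E indep \<le> t + card (f ` (E - B))"
proof -
  have "card (B - f ` (E - B)) \<le> t"
  proof (rule ccontr)
    assume "\<not> ?thesis"
    then have "t + 1 \<le> card (B - f ` (E - B))"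
      by simp
    then obtain Y where Y: "Y \<subseteq> B - f ` (E - B)" "card Y = t + 1"
      by (rule obtain_subset_with_card_n)
    have "claw E indep Y"
      using B Y f unfolding basis_def by (intro claw_if_avoids_exchangeable) blast+
    then show False
      using no_claw Y(2) by blast
  qed
  moreover have "card B - card (f ` (E - B)) \<le> card (B - f ` (E - B))"
    using finite_ground by (intro diff_card_le_card_Diff) simp
  ultimately show ?thesis
    using B unfolding basis_def by linarith
qed

lemma exchangeable_disjoint_if_tight:
  assumes "loopless E indep" and B: "basis B"
    and no_claw: "\<And>X. claw E indep X \<Longrightarrow> card X \<noteq> t + 1"
    and tight: "t + card (E - B) \<le> matroid_rank E indep"
    and e: "e \<in> E - B" "e' \<in> E - B" "e \<noteq> e'"
  shows "exchangeable B e \<inter> exchangeable B e' = {}"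
proof (rule ccontr)
  assume "exchangeable B e \<inter> exchangeable B e' \<noteq> {}"
  then obtain d where d: "d \<in> exchangeable B e" "d \<in> exchangeable B e'"
    by blast
  obtain f where f: "\<And>x. x \<in> E - B \<Longrightarrow> f x \<in> exchangeable B x"
    using exchangeable_choice[OF assms(1) B] by blast
  define g where "g x = (if x = e \<or> x = e' then d else f x)" for x
  have g: "\<And>x. x \<in> E - B \<Longrightarrow> g x \<in> exchangeable B x"
    using f d unfolding g_def by auto
  have "\<not> inj_on g (E - B)"
    using e unfolding inj_on_def g_def by auto
  then have "card (g ` (E - B)) < card (E - B)"
    using finite_ground card_image_le[of "E - B" g] eq_card_imp_inj_on[of "E - B" g]
    by fastforce
  then show False
    using rank_le_card_image_if_claw_free[OF B no_claw g] tight by linarith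
qed

lemma basis_exchange_disjoint:
  assumes B: "basis B"
    and disjoint: "\<And>e e'. e \<in> E - B \<Longrightarrow> e' \<in> E - B \<Longrightarrow> e \<noteq> e' \<Longrightarrow>
      exchangeable B e \<inter> exchangeable B e' = {}"
    and S: "S \<subseteq> E - B" "\<And>e. e \<in> S \<Longrightarrow> g e \<in> exchangeable B e"
  shows "basis ((B - g ` S) \<union> S)"
proof -
  have "finite S"
    using S(1) finite_ground finite_subset by blast
  then show ?thesis
    using S
  proof (induction S rule: finite_subset_induct')
    case empty
    then show ?case
      using B by simp
  next
    case (insert e S)
    let ?B' = "(B - g ` S) \<union> S"
    have B': "basis ?B'" and "e \<notin> ?B'" and g_e: "g e \<in> exchangeable B e"
      using insert by auto
    have "exchangeable B e \<subseteq> ?B'"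
      using insert disjoint exchangeable_subset by fast
    then have "exchangeable ?B' e = exchangeable B e"
      using exchangeable_eq[OF B B'] insert.hyps(2) \<open>e \<notin> ?B'\<close> by blast
    then have "basis (insert e (?B' - {g e}))"
      using basis_exchange[OF B' \<open>e \<notin> ?B'\<close>] g_e by simp
    moreover have "insert e (?B' - {g e}) = (B - g ` insert e S) \<union> insert e S"
      using insert.hyps(2,3) g_e exchangeable_subset by blast
    ultimately show ?case
      by simp
  qed
qed

lemma indep_iff_no_fundamental_circuit:
  assumes B: "basis B"
    and disjoint: "\<And>e e'. e \<in> E - B \<Longrightarrow> e' \<in> E - B \<Longrightarrow> e \<noteq> e' \<Longrightarrow>
      exchangeable B e \<inter> exchangeable B e' = {}"
  shows "indep I \<longleftrightarrow> I \<subseteq> E \<and> (\<forall>e\<in>E - B. \<not> insert e (exchangeable B e) \<subseteq> I)"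
proof
  assume "indep I"
  have "\<not> insert e (exchangeable B e) \<subseteq> I" if "e \<in> E - B" for e
    using fundamental_circuit_dependent[OF B] that indep_subset[OF \<open>indep I\<close>] by blast
  then show "I \<subseteq> E \<and> (\<forall>e\<in>E - B. \<not> insert e (exchangeable B e) \<subseteq> I)"
    using \<open>indep I\<close> indep_subset_ground by blast
next
  assume I: "I \<subseteq> E \<and> (\<forall>e\<in>E - B. \<not> insert e (exchangeable B e) \<subseteq> I)"
  then obtain x where x: "\<forall>e\<in>E - B. x e \<in> insert e (exchangeable B e) \<and> x e \<notin> I"
    using bchoice[of "E - B" "\<lambda>e y. y \<in> insert e (exchangeable B e) \<and> y \<notin> I"] by blast
  define S where "S = {e \<in> E - B. x e \<noteq> e}"
  have "basis ((B - x ` S) \<union> S)"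
    using x by (intro basis_exchange_disjoint[OF B disjoint]) (auto simp: S_def)
  moreover have "I \<subseteq> (B - x ` S) \<union> S"
  proof
    fix i assume "i \<in> I"
    show "i \<in> (B - x ` S) \<union> S"
    proof (cases "i \<in> B")
      case True
      moreover have "i \<notin> x ` S"
        using x \<open>i \<in> I\<close> unfolding S_def by blast
      ultimately show ?thesis
        by blast
    next
      case False
      then have "i \<in> E - B"
        using I \<open>i \<in> I\<close> by blast
      moreover from this have "x i \<notin> I"
        using x by blast
      then have "x i \<noteq> i"
        using \<open>i \<in> I\<close> by auto
      ultimately show ?thesis
        unfolding S_def by blast
    qed
  qed
  ultimately show "indep I"
    using indep_subset unfolding basis_def by blast
qed

lemma direct_sum_if_exchangeable_disjoint:
  assumes B: "basis B"
    and disjoint: "\<And>e e'. e \<in> E - B \<Longrightarrow> e' \<in> E - B \<Longrightarrow> e \<noteq> e' \<Longrightarrow>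
      exchangeable B e \<inter> exchangeable B e' = {}"
  shows "direct_sum_circuits_coloops E indep (card (E - B))"
proof -
  define k where "k = card (E - B)"
  obtain h where h: "bij_betw h {..<k} (E - B)"
    using ex_bij_betw_nat_finite[of "E - B"] finite_ground by (auto simp: k_def atLeast0LessThan)
  then have h_in: "\<And>i. i < k \<Longrightarrow> h i \<in> E - B"
    by (auto dest: bij_betwE)
  define C where "C i = insert (h i) (exchangeable B (h i))" for i
  have "direct_sum_circuits_coloops E indep k"
  proof (rule direct_sum_circuits_coloopsI)
    fix i assume "i < k"
    then show "C i \<subseteq> E" "C i \<noteq> {}"
      using h_in exchangeable_subset basis_subset_ground[OF B] unfolding C_def by blast+
  next
    fix i j assume "i < k" "j < k" "i \<noteq> j"
    moreover from this have "h i \<noteq> h j"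
      using h unfolding bij_betw_def inj_on_def by blast
    ultimately show "C i \<inter> C j = {}"
      using h_in disjoint exchangeable_subset unfolding C_def by blast
  next
    fix I
    have "E - B = h ` {..<k}"
      using h by (simp add: bij_betw_def)
    then have "(\<forall>e\<in>E - B. \<not> insert e (exchangeable B e) \<subseteq> I) \<longleftrightarrow> (\<forall>i<k. \<not> C i \<subseteq> I)"
      unfolding C_def by (simp add: Ball_image_comp) (simp add: Ball_def)
    then show "indep I \<longleftrightarrow> I \<subseteq> E \<and> (\<forall>i<k. \<not> C i \<subseteq> I)"
      using indep_iff_no_fundamental_circuit[OF B disjoint] by simp
  qed
  then show ?thesis
    unfolding k_def .
qed

end

theorem lemma3p2:
  fixes E :: "'a set" and indep :: "'a set \<Rightarrow> bool" and r t :: nat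
  assumes "1 \<le> t" and "t \<le> r"
    and "matroid E indep"
    and "loopless E indep"
    and "matroid_rank E indep = r"
    and "\<not> (\<exists>X. claw E indep X \<and> card X = t + 1)"
  shows "card E \<ge> 2 * r - t \<and>
         (card E = 2 * r - t \<longrightarrow> direct_sum_circuits_coloops E indep (r - t))"
proof -
  interpret fin_matroid E indep
    by (rule fin_matroid.intro) fact
  obtain B where B: "basis B"
    by (rule basis_exists)
  have no_claw: "\<And>X. claw E indep X \<Longrightarrow> card X \<noteq> t + 1"
    using assms(6) by blast
  have card_E: "card E = r + card (E - B)"
    using card_ground_eq_rank_add[OF B] assms(5) by simp
  obtain f where f: "\<And>e. e \<in> E - B \<Longrightarrow> f e \<in> exchangeable B e"
    using exchangeable_choice[OF assms(4) B] by blast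
  have "r \<le> t + card (f ` (E - B))"
    using rank_le_card_image_if_claw_free[OF B no_claw f] assms(5) by simp
  moreover have "card (f ` (E - B)) \<le> card (E - B)"
    using finite_ground by (intro card_image_le) simp
  moreover have "direct_sum_circuits_coloops E indep (r - t)" if "card E = 2 * r - t"
  proof -
    have "t + card (E - B) \<le> matroid_rank E indep"
      using that card_E assms(2,5) by linarith
    from exchangeable_disjoint_if_tight[OF assms(4) B no_claw this]
    have "direct_sum_circuits_coloops E indep (card (E - B))"
      by (rule direct_sum_if_exchangeable_disjoint[OF B])
    moreover have "card (E - B) = r - t"
      using that card_E assms(2) by linarith
    ultimately show ?thesis
      by simp
  qed
  ultimately show ?thesis
    using card_E by linarith
qed

end
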